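(* Let $D,W,N_0,\zeta,P_A,h,g>0$ and $\gamma=\frac{g\zeta P_A h}{WN_0}$. Consider the problem: minimize $\tau_0+\tau_S$ over $\tau_0,\tau_S,P\ge 0$ subject to $P\tau_S\le \zeta P_A h\tau_0$ and $\tau_S W\log_2\left(1+\frac{Pg}{WN_0}\right)\ge D$. Its optimal solution has $$\dot\tau_S=\frac{D\ln 2}{W\alpha},\qquad \dot\tau_0=\frac{D\ln 2}{W\alpha\gamma}\left(2^{\alpha/\ln 2}-1\right),$$ where $\alpha=\mathbb{L}_0\!\left(\frac{\gamma-1}{e}\right)+1$ and $\mathbb{L}_0$ is the principal (branch $0$) Lambert W function.
   Context: Single source wireless powered network without a maximum transmit power constraint: the source harvests energy $\zeta P_A h\tau_0$ during time $\tau_0$ and then transmits $D$ bits with power $P$ during time $\tau_S$ over an AWGN channel with gain $g$, bandwidth $W$ and noise spectral density $N_0$. *)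

theory Defs
  imports Complex_Main
begin

text \<open>Principal branch of the Lambert W function: for x \<ge> -1/e, the unique w \<ge> -1 with w e^w = x.\<close>
definition lambertW0 :: "real \<Rightarrow> real" where
  "lambertW0 x = (THE w. w \<ge> -1 \<and> w * exp w = x)"

definition feasible :: "real \<Rightarrow> real \<Rightarrow> real \<Rightarrow> real \<Rightarrow> real \<Rightarrow> real \<Rightarrow> real \<Rightarrow> real \<Rightarrow> real
    \<Rightarrow> real \<Rightarrow> bool" where
  "feasible D W N0 \<zeta> PA h g \<tau>0 \<tau>S P \<longleftrightarrow>
     \<tau>0 \<ge> 0 \<and> \<tau>S \<ge> 0 \<and> P \<ge> 0 \<and>
     P * \<tau>S \<le> \<zeta> * PA * h * \<tau>0 \<and>
     \<tau>S * W * log 2 (1 + P * g / (W * N0)) \<ge> D"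

definition optimal :: "real \<Rightarrow> real \<Rightarrow> real \<Rightarrow> real \<Rightarrow> real \<Rightarrow> real \<Rightarrow> real \<Rightarrow> real \<Rightarrow> real
    \<Rightarrow> real \<Rightarrow> bool" where
  "optimal D W N0 \<zeta> PA h g \<tau>0 \<tau>S P \<longleftrightarrow>
     feasible D W N0 \<zeta> PA h g \<tau>0 \<tau>S P \<and>
     (\<forall>t0 tS Q. feasible D W N0 \<zeta> PA h g t0 tS Q \<longrightarrow> \<tau>0 + \<tau>S \<le> t0 + tS)"

end

theory Submission
  imports Defs
begin

text \<open>Write \<open>x = D ln 2 / (W \<tau>S)\<close> for the spectral efficiency in nats. The rate constraint
  says \<open>1 + P g / (W N0) \<ge> e\<^sup>x\<close>, so the energy constraint forces \<open>\<gamma> \<tau>0 \<ge> \<tau>S (e\<^sup>x - 1)\<close> and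
  \<open>\<gamma> (\<tau>0 + \<tau>S) \<ge> \<tau>S (e\<^sup>x + \<gamma> - 1) = (D ln 2 / W) (e\<^sup>x + \<gamma> - 1) / x\<close>.
  The number \<open>\<alpha> = W\<^sub>0((\<gamma> - 1) / e) + 1\<close> is the solution of \<open>(\<alpha> - 1) e\<^sup>\<alpha> = \<gamma> - 1\<close>, which says that
  the tangent to \<open>exp\<close> at \<open>\<alpha>\<close> passes through \<open>(0, 1 - \<gamma>)\<close>; by strict convexity
  \<open>e\<^sup>x + \<gamma> - 1 \<ge> e\<^sup>\<alpha> x\<close> with equality only at \<open>x = \<alpha>\<close>. So the total time is at least
  \<open>D ln 2 e\<^sup>\<alpha> / (W \<gamma>)\<close>, attained exactly when \<open>x = \<alpha>\<close> and all harvested energy is spent.\<close>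

lemma exp_tangent_le: "exp a * (1 + (x - a)) \<le> exp (x::real)"
  using exp_ge_add_one_self[of "x - a"] by (simp add: exp_diff field_simps)

lemma exp_tangent_less:
  fixes a x :: real
  assumes "x \<noteq> a"
  shows "exp a * (1 + (x - a)) < exp x"
  using exp_minus_greater[of "a - x"] assms by (simp add: exp_diff field_simps)

lemma lambert_point_tangent:
  fixes \<alpha> \<gamma> x :: real
  assumes "(\<alpha> - 1) * exp \<alpha> = \<gamma> - 1"
  shows "exp \<alpha> * x \<le> exp x + \<gamma> - 1"
    and "x \<noteq> \<alpha> \<Longrightarrow> exp \<alpha> * x < exp x + \<gamma> - 1"
  using assms exp_tangent_le[of \<alpha> x] exp_tangent_less[of x \<alpha>] by (simp_all add: algebra_simps)

lemma mult_exp_strict_mono_on: "strict_mono_on {-1..} (\<lambda>w::real. w * exp w)"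
proof (rule strict_mono_onI)
  fix a b :: real
  assume "a \<in> {-1..}" "a < b"
  show "a * exp a < b * exp b"
  proof (rule DERIV_pos_imp_increasing_open[OF \<open>a < b\<close>])
    fix x assume "a < x"
    then have "0 < (1 + x) * exp x" using \<open>a \<in> {-1..}\<close> by simp
    then show "\<exists>y. ((\<lambda>w. w * exp w) has_real_derivative y) (at x) \<and> 0 < y"
      by (auto intro!: exI derivative_eq_intros simp: algebra_simps)
  qed (intro continuous_intros)
qed

lemma lambertW0:
  fixes y :: real
  assumes "- exp (-1) \<le> y"
  shows "-1 \<le> lambertW0 y" and "lambertW0 y * exp (lambertW0 y) = y"
proof -
  have "\<bar>y\<bar> \<le> \<bar>y\<bar> * exp \<bar>y\<bar>"
    using mult_left_mono[of 1 "exp \<bar>y\<bar>" "\<bar>y\<bar>"] by simp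
  then have "y \<le> \<bar>y\<bar> * exp \<bar>y\<bar>" by linarith
  moreover have "continuous_on {-1..\<bar>y\<bar>} (\<lambda>w. w * exp w)"
    by (intro continuous_intros)
  ultimately have "\<exists>w\<ge>-1. w \<le> \<bar>y\<bar> \<and> w * exp w = y"
    using assms by (intro IVT') (auto simp: exp_minus)
  then obtain w where w: "-1 \<le> w" "w * exp w = y" by blast
  have "lambertW0 y = w"
    unfolding lambertW0_def
  proof (rule the_equality)
    fix v assume "-1 \<le> v \<and> v * exp v = y"
    with w show "v = w"
      by (auto intro: inj_onD[OF strict_mono_on_imp_inj_on[OF mult_exp_strict_mono_on]])
  qed (use w in simp)
  with w show "-1 \<le> lambertW0 y" "lambertW0 y * exp (lambertW0 y) = y" by simp_all
qed

lemma lambertW0_shifted: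
  fixes \<gamma> :: real
  assumes "0 < \<gamma>"
  defines "\<alpha> \<equiv> lambertW0 ((\<gamma> - 1) / exp 1) + 1"
  shows "(\<alpha> - 1) * exp \<alpha> = \<gamma> - 1" and "0 < \<alpha>"
proof -
  have "- exp (-1) \<le> (\<gamma> - 1) / exp 1"
    using assms(1) by (simp add: exp_minus field_simps)
  from lambertW0[OF this] have "-1 \<le> \<alpha> - 1" and "(\<alpha> - 1) * (exp \<alpha> / exp 1) = (\<gamma> - 1) / exp 1"
    unfolding \<alpha>_def by (simp_all add: exp_add)
  then show "(\<alpha> - 1) * exp \<alpha> = \<gamma> - 1" and "0 < \<alpha>"
    using assms(1) by (auto simp: field_simps less_le)
qed

context
  fixes D W N0 \<zeta> PA h g \<gamma> :: real
  assumes pos: "D > 0" "W > 0" "N0 > 0" "\<zeta> > 0" "PA > 0" "h > 0" "g > 0"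
    and \<gamma>_def: "\<gamma> = g * \<zeta> * PA * h / (W * N0)"
begin

lemma gamma_pos: "0 < \<gamma>"
  unfolding \<gamma>_def using pos by simp

lemma feasible_transmit_time_pos:
  assumes "feasible D W N0 \<zeta> PA h g t0 tS P"
  shows "0 < tS"
  using assms pos(1) unfolding feasible_def by (cases "tS = 0") auto

lemma feasible_harvest_time_ge:
  assumes feas: "feasible D W N0 \<zeta> PA h g t0 tS P"
  shows "tS * (exp (D * ln 2 / (W * tS)) - 1) \<le> \<gamma> * t0"
proof -
  have tS: "0 < tS" using feasible_transmit_time_pos[OF feas] .
  have snr_pos: "0 < 1 + P * g / (W * N0)" using feas pos unfolding feasible_def by (auto intro!: add_pos_nonneg)
  have "D \<le> tS * W * (ln (1 + P * g / (W * N0)) / ln 2)"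
    using feas unfolding feasible_def log_def by simp
  then have "D * ln 2 / (W * tS) \<le> ln (1 + P * g / (W * N0))"
    using tS pos(2) by (simp add: field_simps)
  then have "exp (D * ln 2 / (W * tS)) \<le> 1 + P * g / (W * N0)"
    using snr_pos by (metis exp_le_cancel_iff exp_ln)
  then have "tS * (exp (D * ln 2 / (W * tS)) - 1) \<le> tS * (P * g / (W * N0))"
    using tS by (intro mult_left_mono) auto
  also have "\<dots> = g / (W * N0) * (P * tS)" by simp
  also have "\<dots> \<le> g / (W * N0) * (\<zeta> * PA * h * t0)"
    using feas pos unfolding feasible_def by (intro mult_left_mono) auto
  also have "\<dots> = \<gamma> * t0" unfolding \<gamma>_def by simp
  finally show ?thesis .
qed

lemma feasible_total_time_ge:
  assumes "(\<alpha> - 1) * exp \<alpha> = \<gamma> - 1" and feas: "feasible D W N0 \<zeta> PA h g t0 tS P"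
  shows "D * ln 2 / W * exp \<alpha> \<le> \<gamma> * (t0 + tS)"
proof -
  define x where "x = D * ln 2 / (W * tS)"
  have tS: "0 < tS" using feasible_transmit_time_pos[OF feas] .
  have "D * ln 2 / W * exp \<alpha> = tS * (exp \<alpha> * x)"
    unfolding x_def using tS by (simp add: field_simps)
  also have "\<dots> \<le> tS * (exp x + \<gamma> - 1)"
    using lambert_point_tangent(1)[OF assms(1)] tS by simp
  also have "\<dots> \<le> \<gamma> * (t0 + tS)"
    using feasible_harvest_time_ge[OF feas] unfolding x_def by (simp add: algebra_simps)
  finally show ?thesis .
qed

lemma feasible_total_time_eq:
  assumes "(\<alpha> - 1) * exp \<alpha> = \<gamma> - 1" and feas: "feasible D W N0 \<zeta> PA h g t0 tS P"
    and eq: "\<gamma> * (t0 + tS) = D * ln 2 / W * exp \<alpha>"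
  shows "tS = D * ln 2 / (W * \<alpha>)" and "t0 = D * ln 2 / (W * \<alpha> * \<gamma>) * (exp \<alpha> - 1)"
proof -
  define x where "x = D * ln 2 / (W * tS)"
  have tS: "0 < tS" using feasible_transmit_time_pos[OF feas] .
  have r: "D * ln 2 / W = tS * x" unfolding x_def using tS by (simp add: field_simps)
  have "tS * (exp x + \<gamma> - 1) \<le> tS * (exp \<alpha> * x)"
    using feasible_harvest_time_ge[OF feas] eq r unfolding x_def by (simp add: algebra_simps)
  then have "\<not> exp \<alpha> * x < exp x + \<gamma> - 1" using tS by simp
  then have "x = \<alpha>" using lambert_point_tangent(2)[OF assms(1)] by blast
  moreover have "0 < x" unfolding x_def using tS pos by simp
  ultimately show tS_eq: "tS = D * ln 2 / (W * \<alpha>)" unfolding x_def using tS pos by (auto simp: field_simps)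
  have "\<gamma> * t0 = tS * (\<alpha> * exp \<alpha>) - \<gamma> * tS"
    using eq r \<open>x = \<alpha>\<close> by (simp add: algebra_simps)
  also have "\<dots> = tS * (exp \<alpha> - 1)"
    using arg_cong[OF assms(1), of "(*) tS"] by (simp add: algebra_simps)
  finally have "t0 = tS * (exp \<alpha> - 1) / \<gamma>"
    using gamma_pos by (simp add: field_simps)
  then show "t0 = D * ln 2 / (W * \<alpha> * \<gamma>) * (exp \<alpha> - 1)" unfolding tS_eq by simp
qed

lemma feasible_lambert_point:
  assumes "0 < \<alpha>"
  shows "feasible D W N0 \<zeta> PA h g (D * ln 2 / (W * \<alpha> * \<gamma>) * (exp \<alpha> - 1)) (D * ln 2 / (W * \<alpha>))
    ((exp \<alpha> - 1) * W * N0 / g)"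
proof -
  have "1 + (exp \<alpha> - 1) * W * N0 / g * g / (W * N0) = exp \<alpha>"
    using pos by (simp add: field_simps)
  then have "D * ln 2 / (W * \<alpha>) * W * log 2 (1 + (exp \<alpha> - 1) * W * N0 / g * g / (W * N0)) = D"
    using assms pos by (simp add: log_def field_simps)
  then show ?thesis
    unfolding feasible_def \<gamma>_def using assms pos by (simp add: field_simps)
qed

lemma lambert_point_total_time:
  assumes "(\<alpha> - 1) * exp \<alpha> = \<gamma> - 1" and "0 < \<alpha>"
  shows "\<gamma> * (D * ln 2 / (W * \<alpha> * \<gamma>) * (exp \<alpha> - 1) + D * ln 2 / (W * \<alpha>)) = D * ln 2 / W * exp \<alpha>"
proof -
  define tS where "tS = D * ln 2 / (W * \<alpha>)"
  have "\<gamma> * (tS / \<gamma> * (exp \<alpha> - 1) + tS) = tS * (exp \<alpha> + \<gamma> - 1)"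
    using gamma_pos by (simp add: field_simps)
  also have "\<dots> = tS * (\<alpha> * exp \<alpha>)"
    using arg_cong[OF assms(1), of "(*) tS"] by (simp add: algebra_simps)
  also have "\<dots> = D * ln 2 / W * exp \<alpha>" unfolding tS_def using assms(2) by simp
  finally show ?thesis unfolding tS_def by simp
qed

end

theorem lemma2:
  fixes D W N0 \<zeta> PA h g \<gamma> \<alpha> :: real
  assumes "D > 0" "W > 0" "N0 > 0" "\<zeta> > 0" "PA > 0" "h > 0" "g > 0"
    and "\<gamma> = g * \<zeta> * PA * h / (W * N0)"
    and "\<alpha> = lambertW0 ((\<gamma> - 1) / exp 1) + 1"
  shows "(\<exists>\<tau>0 \<tau>S P. optimal D W N0 \<zeta> PA h g \<tau>0 \<tau>S P) \<and>
         (\<forall>\<tau>0 \<tau>S P. optimal D W N0 \<zeta> PA h g \<tau>0 \<tau>S P \<longrightarrow>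
            \<tau>S = D * ln 2 / (W * \<alpha>) \<and>
            \<tau>0 = D * ln 2 / (W * \<alpha> * \<gamma>) * (2 powr (\<alpha> / ln 2) - 1))"
proof -
  have \<gamma>: "0 < \<gamma>" using gamma_pos[OF assms(1-8)] .
  have \<alpha>: "(\<alpha> - 1) * exp \<alpha> = \<gamma> - 1" "0 < \<alpha>"
    using lambertW0_shifted[OF \<gamma>] assms(9) by simp_all
  define t0 tS where "t0 = D * ln 2 / (W * \<alpha> * \<gamma>) * (exp \<alpha> - 1)" and "tS = D * ln 2 / (W * \<alpha>)"
  have feas: "feasible D W N0 \<zeta> PA h g t0 tS ((exp \<alpha> - 1) * W * N0 / g)"
    unfolding t0_def tS_def using feasible_lambert_point[OF assms(1-8) \<alpha>(2)] .
  have cost: "\<gamma> * (t0 + tS) = D * ln 2 / W * exp \<alpha>"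
    unfolding t0_def tS_def using lambert_point_total_time[OF assms(1-8) \<alpha>] .
  then have least: "\<gamma> * (t0' + tS') \<ge> \<gamma> * (t0 + tS)" if "feasible D W N0 \<zeta> PA h g t0' tS' P'" for t0' tS' P'
    using feasible_total_time_ge[OF assms(1-8) \<alpha>(1) that] by simp
  have "optimal D W N0 \<zeta> PA h g t0 tS ((exp \<alpha> - 1) * W * N0 / g)"
    unfolding optimal_def using feas least \<gamma> by auto
  moreover have "t0' = t0 \<and> tS' = tS" if "optimal D W N0 \<zeta> PA h g t0' tS' P'" for t0' tS' P'
  proof -
    have feas': "feasible D W N0 \<zeta> PA h g t0' tS' P'" and "t0' + tS' \<le> t0 + tS"
      using that feas unfolding optimal_def by auto
    then have "\<gamma> * (t0' + tS') \<le> \<gamma> * (t0 + tS)" using \<gamma> by simp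
    then have "\<gamma> * (t0' + tS') = D * ln 2 / W * exp \<alpha>"
      using least[OF feas'] cost by linarith
    from feasible_total_time_eq[OF assms(1-8) \<alpha>(1) feas' this] show ?thesis
      unfolding t0_def tS_def by simp
  qed
  moreover have "2 powr (\<alpha> / ln 2) = exp \<alpha>" by (simp add: powr_def)
  ultimately show ?thesis unfolding t0_def tS_def by auto
qed

end
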